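(* Let $G$ be a topological group. Then $L^0(G)$ is the closure of $\bigcup_{n\ge1}h_n(G^n)$.
   Context: Let $\lambda$ be Lebesgue measure on $[0,1]$. A map $f\colon [0,1]\to G$ is strongly $\lambda$-measurable if for every $\epsilon>0$ there is a closed $A\subseteq[0,1]$ with $\lambda([0,1]\setminus A)\le\epsilon$ and $f|_A$ continuous. $L^{0}(G)$ is the set of $\lambda$-a.e. equivalence classes of strongly $\lambda$-measurable maps $[0,1]\to G$, with pointwise group operations and the topology of convergence in measure: a neighbourhood basis of the identity consists of the sets $N(U,\epsilon)=\{f : \lambda(\{x: f(x)\notin U\})<\epsilon\}$, $U$ an open identity neighbourhood in $G$, $\epsilon>0$. For $n\ge1$, $h_n\colon G^n\to L^0(G)$ sends $(g_1,\dots,g_n)$ to the map which is constantly $g_i$ on $[(i-1)/n,i/n)$ for $i=1,\dots,n$. *)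

theory Defs
  imports "HOL-Analysis.Analysis"
begin

text \<open>Topological groups are modelled by the type class topological_group_add
  (a not necessarily commutative group, written additively, with continuous
  addition and inversion).\<close>

definition strongly_measurable :: "(real \<Rightarrow> 'a::topological_space) \<Rightarrow> bool" where
  "strongly_measurable f \<longleftrightarrow>
     (\<forall>\<epsilon>>0. \<exists>A. closed A \<and> A \<subseteq> {0..1} \<and>
        measure lebesgue ({0..1} - A) \<le> \<epsilon> \<and> continuous_on A f)"

text \<open>Elements of L0(G) are represented by strongly measurable maps; the
  a.e.-equivalence is respected by all notions below (only measures of subsets
  of [0,1] are used).\<close>
definition L0 :: "(real \<Rightarrow> 'a::topological_group_add) set" where
  "L0 = {f. strongly_measurable f}"

text \<open>The basic neighbourhood N(U,eps) of the identity, translated to f: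
  f + N(U,eps) = {g. lambda{x in [0,1]. -f x + g x \<notin> U} < eps}.\<close>
definition L0_nbhd :: "(real \<Rightarrow> 'a::topological_group_add) \<Rightarrow> 'a set \<Rightarrow> real \<Rightarrow> (real \<Rightarrow> 'a) set" where
  "L0_nbhd f U \<epsilon> = {g \<in> L0. {x \<in> {0..1}. - f x + g x \<notin> U} \<in> sets lebesgue \<and>
                           measure lebesgue {x \<in> {0..1}. - f x + g x \<notin> U} < \<epsilon>}"

text \<open>Closure in L0(G) with respect to the topology of convergence in measure,
  given by its neighbourhood bases.\<close>
definition L0_closure :: "(real \<Rightarrow> 'a::topological_group_add) set \<Rightarrow> (real \<Rightarrow> 'a) set" where
  "L0_closure S = {f \<in> L0. \<forall>U \<epsilon>. open U \<and> 0 \<in> U \<and> \<epsilon> > 0 \<longrightarrow> L0_nbhd f U \<epsilon> \<inter> S \<noteq> {}}"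

text \<open>h_n: G^n \<rightarrow> L0(G); a tuple (g_1,...,g_n) is the list gs of length n, and
  h_n gs is constantly gs!(i-1) on [(i-1)/n, i/n). The value at x = 1 (a null set)
  is set to the last entry.\<close>
definition h :: "nat \<Rightarrow> 'a list \<Rightarrow> real \<Rightarrow> 'a" where
  "h n gs x = gs ! min (nat \<lfloor>real n * x\<rfloor>) (n - 1)"

end

theory Submission
  imports Defs
begin

text \<open>A strongly measurable f is continuous on a closed set A \<subseteq> [0,1] of almost full measure.
  On the compact set A it is uniformly continuous for the left uniformity of G, so sampling f
  at one point of A in each cell of a fine enough partition of [0,1] into n intervals gives a
  step function h n gs with - f x + h n gs x \<in> U on all of A. The set where this fails lies
  outside A, and it is Lebesgue measurable because step functions are strongly measurable and
  strongly measurable maps have measurable preimages of closed sets.\<close>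

lemma zero_nbhd_uminus_add:
  fixes U :: "'a::topological_group_add set"
  assumes "open U" "0 \<in> U"
  obtains W where "open W" "0 \<in> W" "\<And>a b. a \<in> W \<Longrightarrow> b \<in> W \<Longrightarrow> - a + b \<in> U"
proof -
  let ?d = "\<lambda>p::'a \<times> 'a. - fst p + snd p"
  have "open (?d -` U)"
    using assms(1) by (rule open_vimage) (intro continuous_intros)
  moreover have "(0, 0) \<in> ?d -` U"
    using assms(2) by simp
  ultimately obtain A B where "open A" "open B" "(0, 0) \<in> A \<times> B" "A \<times> B \<subseteq> ?d -` U"
    by (rule open_prod_elim)
  then show ?thesis
    by (intro that[of "A \<inter> B"]) auto
qed

lemma compact_uniformly_continuous_group:
  fixes f :: "'b::metric_space \<Rightarrow> 'a::topological_group_add"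
  assumes "compact A" "continuous_on A f" "open U" "0 \<in> U"
  obtains d where "d > 0" "\<And>x y. x \<in> A \<Longrightarrow> y \<in> A \<Longrightarrow> dist x y < d \<Longrightarrow> - f x + f y \<in> U"
proof -
  obtain W where W: "open W" "0 \<in> W" "\<And>a b. a \<in> W \<Longrightarrow> b \<in> W \<Longrightarrow> - a + b \<in> U"
    using zero_nbhd_uminus_add[OF assms(3,4)] by blast
  define \<G> where "\<G> = {T. open T \<and> (\<forall>x\<in>A \<inter> T. \<forall>y\<in>A \<inter> T. - f x + f y \<in> U)}"
  have "A \<subseteq> \<Union>\<G>"
  proof
    fix z assume "z \<in> A"
    have "open ((\<lambda>y. - f z + y) -` W)"
      using W(1) by (rule open_vimage) (intro continuous_intros)
    then obtain T where T: "open T" "T \<inter> A = A \<inter> f -` ((\<lambda>y. - f z + y) -` W)"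
      using assms(2) by (metis continuous_on_open_invariant inf_commute)
    have "T \<in> \<G>"
    proof -
      have "- f x + f y \<in> U" if "x \<in> A \<inter> T" "y \<in> A \<inter> T" for x y
      proof -
        have "- (- f z + f x) + (- f z + f y) \<in> U"
          using that T(2) by (intro W(3)) auto
        then show ?thesis
          by (simp add: minus_add add.assoc)
      qed
      then show ?thesis
        using T(1) by (simp add: \<G>_def)
    qed
    moreover have "z \<in> T"
      using \<open>z \<in> A\<close> T(2) W(2) by auto
    ultimately show "z \<in> \<Union>\<G>" by blast
  qed
  moreover have "\<And>T. T \<in> \<G> \<Longrightarrow> open T"
    by (simp add: \<G>_def)
  ultimately obtain d where d: "0 < d" "\<And>x. x \<in> A \<Longrightarrow> \<exists>T\<in>\<G>. ball x d \<subseteq> T"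
    using Heine_Borel_lemma[OF assms(1)] by blast
  show ?thesis
  proof (rule that[OF d(1)])
    fix x y assume "x \<in> A" "y \<in> A" "dist x y < d"
    moreover obtain T where "T \<in> \<G>" "ball x d \<subseteq> T"
      using d(2) \<open>x \<in> A\<close> by blast
    moreover have "x \<in> ball x d" "y \<in> ball x d"
      using d(1) \<open>dist x y < d\<close> by auto
    ultimately show "- f x + f y \<in> U"
      unfolding \<G>_def by blast
  qed
qed

lemma strongly_measurable_uminus_add:
  fixes f g :: "real \<Rightarrow> 'a::topological_group_add"
  assumes f: "strongly_measurable f" and g: "strongly_measurable g"
  shows "strongly_measurable (\<lambda>x. - f x + g x)"
  unfolding strongly_measurable_def
proof (intro allI impI)
  fix \<epsilon> :: real assume "\<epsilon> > 0"
  then obtain A B where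
    A: "closed A" "A \<subseteq> {0..1}" "measure lebesgue ({0..1} - A) \<le> \<epsilon> / 2" "continuous_on A f" and
    B: "closed B" "B \<subseteq> {0..1}" "measure lebesgue ({0..1} - B) \<le> \<epsilon> / 2" "continuous_on B g"
    using f g unfolding strongly_measurable_def by (meson half_gt_zero)
  have "measure lebesgue ({0..1} - A \<inter> B) = measure lebesgue (({0..1} - A) \<union> ({0..1} - B))"
    by (simp add: Diff_Int)
  also have "\<dots> \<le> \<epsilon>"
    using measure_Un_le[of "{0..1} - A" lebesgue "{0..1} - B"] A(1,3) B(1,3) by simp
  finally show "\<exists>C. closed C \<and> C \<subseteq> {0..1} \<and> measure lebesgue ({0..1} - C) \<le> \<epsilon> \<and>
      continuous_on C (\<lambda>x. - f x + g x)"
    using A B by (intro exI[of _ "A \<inter> B"]) (auto intro!: continuous_intros intro: continuous_on_subset)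
qed

lemma strongly_measurable_closed_preimage:
  assumes f: "strongly_measurable f" and "closed C"
  shows "{x \<in> {0..1}. f x \<in> C} \<in> sets lebesgue"
proof -
  obtain A where A: "\<And>k. closed (A k)" "\<And>k. A k \<subseteq> {0..1}"
    "\<And>k. measure lebesgue ({0..1} - A k) \<le> 1 / Suc k" "\<And>k. continuous_on (A k) f"
  proof -
    have "\<forall>k::nat. \<exists>A. closed A \<and> A \<subseteq> {0..1} \<and> measure lebesgue ({0..1} - A) \<le> 1 / Suc k \<and> continuous_on A f"
      using f unfolding strongly_measurable_def by simp
    then show thesis
      using that by metis
  qed
  define N where "N = {0..1} - (\<Union>k. A k)"
  have "N \<in> null_sets lebesgue"
    unfolding completion.null_sets_outer_le
  proof (intro allI impI)
    fix e :: real assume "e > 0"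
    then obtain k where "1 / Suc k < e"
      using nat_approx_posE by metis
    then show "\<exists>T\<in>lmeasurable. N \<subseteq> T \<and> measure lebesgue T \<le> e"
      using A(1,3)[of k] by (intro bexI[of _ "{0..1} - A k"]) (auto simp: N_def fmeasurable_Diff)
  qed
  then have "{x \<in> {0..1}. f x \<in> C} \<inter> N \<in> sets lebesgue"
    by (meson Int_lower2 completion.complete2 null_setsD2)
  moreover have "A k \<inter> f -` C \<in> sets lebesgue" for k
    using continuous_closed_preimage[OF A(4) A(1) \<open>closed C\<close>] by simp
  moreover have "{x \<in> {0..1}. f x \<in> C} = (\<Union>k. A k \<inter> f -` C) \<union> ({x \<in> {0..1}. f x \<in> C} \<inter> N)"
    using A(2) unfolding N_def by blast
  ultimately show ?thesis
    by (metis (no_types, lifting) image_subset_iff sets.Un sets.countable_UN)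
qed

lemma strongly_measurable_if_continuous_off_finite:
  assumes "finite F" "continuous_on ({0..1} - F) f"
  shows "strongly_measurable f"
  unfolding strongly_measurable_def
proof (intro allI impI)
  fix \<epsilon> :: real assume "\<epsilon> > 0"
  define \<delta> where "\<delta> = \<epsilon> / (2 * (card F + 1))"
  have "\<delta> > 0"
    using \<open>\<epsilon> > 0\<close> by (simp add: \<delta>_def)
  define A where "A = {0..1} - (\<Union>p\<in>F. {p - \<delta><..<p + \<delta>})"
  have "closed A"
    unfolding A_def by (intro closed_Diff open_UN) auto
  moreover have "A \<subseteq> {0..1} - F"
    using \<open>\<delta> > 0\<close> by (auto simp: A_def)
  moreover have "measure lebesgue ({0..1} - A) \<le> \<epsilon>"
  proof -
    have "{0..1} - A \<subseteq> (\<Union>p\<in>F. {p - \<delta><..<p + \<delta>})"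
      by (auto simp: A_def)
    then have "measure lebesgue ({0..1} - A) \<le> measure lebesgue (\<Union>p\<in>F. {p - \<delta><..<p + \<delta>})"
      using \<open>finite F\<close> \<open>closed A\<close> by (intro measure_mono_fmeasurable) auto
    also have "\<dots> \<le> (\<Sum>p\<in>F. measure lebesgue {p - \<delta><..<p + \<delta>})"
      using \<open>finite F\<close> by (intro measure_UNION_le) auto
    also have "\<dots> = card F * (2 * \<delta>)"
      using \<open>\<delta> > 0\<close> by simp
    also have "\<dots> \<le> \<epsilon>"
      using \<open>\<epsilon> > 0\<close> by (simp add: \<delta>_def field_simps)
    finally show ?thesis .
  qed
  ultimately show "\<exists>A. closed A \<and> A \<subseteq> {0..1} \<and> measure lebesgue ({0..1} - A) \<le> \<epsilon> \<and> continuous_on A f"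
    using assms(2) by (blast intro: continuous_on_subset)
qed

definition step_index :: "nat \<Rightarrow> real \<Rightarrow> nat" where
  "step_index n x = min (nat \<lfloor>real n * x\<rfloor>) (n - 1)"

lemma h_eq_nth_step_index: "h n gs x = gs ! step_index n x"
  by (simp add: h_def step_index_def)

lemma step_index_bounds:
  assumes "n \<ge> 1" "x \<in> {0..1}"
  shows "step_index n x < n" "real (step_index n x) \<le> real n * x" "real n * x \<le> real (step_index n x) + 1"
proof -
  have "0 \<le> real n * x" "real n * x \<le> real n"
    using assms by (auto simp: mult_left_le)
  then show "step_index n x < n" "real (step_index n x) \<le> real n * x" "real n * x \<le> real (step_index n x) + 1"
    using assms(1) unfolding step_index_def by linarith+
qed

lemma step_index_eq:
  assumes "i < n" "real i < real n * x" "real n * x < real i + 1"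
  shows "step_index n x = i"
proof -
  have "\<lfloor>real n * x\<rfloor> = int i"
    using assms(2,3) by (simp add: floor_eq_iff)
  then show ?thesis
    using assms(1) by (simp add: step_index_def)
qed

lemma continuous_on_h_off_grid:
  assumes "n \<ge> 1"
  shows "continuous_on ({0..1} - (\<lambda>i. real i / n) ` {..n}) (h n gs)"
proof (rule continuous_on_subset)
  show "continuous_on (\<Union>i<n. {real i / n<..<(real i + 1) / n}) (h n gs)"
  proof (intro continuous_on_open_UN)
    fix i assume "i \<in> {..<n}"
    have "h n gs x = gs ! i" if "x \<in> {real i / n<..<(real i + 1) / n}" for x
      using that \<open>i \<in> {..<n}\<close> assms
      by (auto simp: h_eq_nth_step_index field_simps intro!: arg_cong[where f = "(!) gs"] step_index_eq)
    then show "continuous_on {real i / n<..<(real i + 1) / n} (h n gs)"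
      using continuous_on_cong[THEN iffD2, OF refl _ continuous_on_const] by blast
  qed auto
  show "{0..1} - (\<lambda>i. real i / n) ` {..n} \<subseteq> (\<Union>i<n. {real i / n<..<(real i + 1) / n})"
  proof
    fix x assume x: "x \<in> {0..1} - (\<lambda>i. real i / n) ` {..n}"
    define i where "i = step_index n x"
    have "i < n" "real i \<le> real n * x" "real n * x \<le> real i + 1"
      using step_index_bounds[OF assms] x by (auto simp: i_def)
    moreover have "real (Suc i) / n \<in> (\<lambda>i. real i / n) ` {..n}"
      using \<open>i < n\<close> by (intro imageI) simp
    then have "x \<noteq> real i / n" "x \<noteq> real (Suc i) / n"
      using x \<open>i < n\<close> by auto
    ultimately have "x \<in> {real i / n<..<(real i + 1) / n}"
      using assms by (auto simp: field_simps)
    then show "x \<in> (\<Union>i<n. {real i / n<..<(real i + 1) / n})"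
      using \<open>i < n\<close> by blast
  qed
qed

lemma strongly_measurable_h:
  assumes "n \<ge> 1"
  shows "strongly_measurable (h n gs)"
  using continuous_on_h_off_grid[OF assms] by (rule strongly_measurable_if_continuous_off_finite[rotated]) simp

lemma step_function_close_on:
  fixes f :: "real \<Rightarrow> 'a"
  assumes "A \<subseteq> {0..1}" "d > 0" and close: "\<And>x y. x \<in> A \<Longrightarrow> y \<in> A \<Longrightarrow> dist x y < d \<Longrightarrow> P (f x) (f y)"
  obtains n gs where "n \<ge> 1" "length gs = n" "\<And>x. x \<in> A \<Longrightarrow> P (f x) (h n gs x)"
proof -
  obtain k where k: "1 / real (Suc k) < d"
    using nat_approx_posE[OF \<open>d > 0\<close>] by blast
  define n where "n = Suc k"
  \<comment> \<open>On a cell that does not meet A the value is arbitrary.\<close>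
  define gs where "gs = map (\<lambda>i. f (SOME a. a \<in> A \<and> step_index n a = i)) [0..<n]"
  have "P (f x) (h n gs x)" if "x \<in> A" for x
  proof -
    define i where "i = step_index n x"
    define a where "a = (SOME a. a \<in> A \<and> step_index n a = i)"
    have a: "a \<in> A" "step_index n a = i"
      unfolding a_def using someI[of "\<lambda>a. a \<in> A \<and> step_index n a = i" x] that i_def by blast+
    have x01: "x \<in> {0..1}" and a01: "a \<in> {0..1}"
      using assms(1) that a(1) by auto
    have "i < n"
      using step_index_bounds(1)[OF _ x01] by (simp add: i_def n_def)
    then have "h n gs x = f a"
      by (simp add: h_eq_nth_step_index gs_def a_def i_def)
    have "\<bar>real n * x - real n * a\<bar> \<le> 1"
      using step_index_bounds(2,3)[OF _ x01, of n] step_index_bounds(2,3)[OF _ a01, of n] a(2)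
      by (simp add: n_def i_def abs_le_iff)
    then have "real n * dist x a \<le> 1"
      by (simp add: dist_real_def abs_mult flip: right_diff_distrib)
    also have "1 < real n * d"
      using k by (simp add: n_def field_simps)
    finally have "dist x a < d"
      by (simp add: n_def)
    then show ?thesis
      using close[OF that a(1)] \<open>h n gs x = f a\<close> by simp
  qed
  then show thesis
    by (intro that[of n gs]) (simp_all add: n_def gs_def)
qed

lemma step_function_in_L0_nbhd:
  fixes f :: "real \<Rightarrow> 'a::topological_group_add"
  assumes f: "strongly_measurable f" and "open U" "0 \<in> U" "\<epsilon> > 0"
  obtains n gs where "n \<ge> 1" "length gs = n" "h n gs \<in> L0_nbhd f U \<epsilon>"
proof -
  obtain A where A: "closed A" "A \<subseteq> {0..1}" "measure lebesgue ({0..1} - A) \<le> \<epsilon> / 2" "continuous_on A f"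
    using f \<open>\<epsilon> > 0\<close> unfolding strongly_measurable_def by (meson half_gt_zero)
  have "compact A"
    using A(1,2) by (meson bounded_closed_interval bounded_subset compact_eq_bounded_closed)
  then obtain d where "d > 0" "\<And>x y. x \<in> A \<Longrightarrow> y \<in> A \<Longrightarrow> dist x y < d \<Longrightarrow> - f x + f y \<in> U"
    using compact_uniformly_continuous_group A(4) assms(2,3) by metis
  then obtain n gs where n: "n \<ge> 1" "length gs = n" and good: "\<And>x. x \<in> A \<Longrightarrow> - f x + h n gs x \<in> U"
    using step_function_close_on[OF A(2), of d "\<lambda>a b. - a + b \<in> U"] by blast
  define bad where "bad = {x \<in> {0..1}. - f x + h n gs x \<in> - U}"
  have "strongly_measurable (h n gs)"
    using strongly_measurable_h[OF n(1)] .
  then have "bad \<in> sets lebesgue"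
    unfolding bad_def using assms(2) f
    by (intro strongly_measurable_closed_preimage strongly_measurable_uminus_add) auto
  moreover have "measure lebesgue bad \<le> measure lebesgue ({0..1} - A)"
    using good A(1) \<open>bad \<in> sets lebesgue\<close> by (intro measure_mono_fmeasurable) (auto simp: bad_def fmeasurable_Diff)
  ultimately have "h n gs \<in> L0_nbhd f U \<epsilon>"
    using A(3) \<open>\<epsilon> > 0\<close> \<open>strongly_measurable (h n gs)\<close> by (simp add: L0_nbhd_def L0_def bad_def)
  with n show thesis ..
qed

theorem corollary4p2:
  shows "(L0 :: (real \<Rightarrow> 'a::topological_group_add) set) =
    L0_closure (\<Union>n\<in>{1..}. {h n gs | gs. length gs = n})"
proof
  show "L0_closure (\<Union>n\<in>{1..}. {h n gs | gs. length gs = n}) \<subseteq> (L0 :: (real \<Rightarrow> 'a) set)"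
    by (auto simp: L0_closure_def)
  show "(L0 :: (real \<Rightarrow> 'a) set) \<subseteq> L0_closure (\<Union>n\<in>{1..}. {h n gs | gs. length gs = n})"
  proof
    fix f :: "real \<Rightarrow> 'a" assume "f \<in> L0"
    then have "strongly_measurable f"
      by (simp add: L0_def)
    have "L0_nbhd f U \<epsilon> \<inter> (\<Union>n\<in>{1..}. {h n gs | gs. length gs = n}) \<noteq> {}"
      if U: "open U" "0 \<in> U" and "\<epsilon> > 0" for U \<epsilon>
    proof -
      obtain n gs where "n \<ge> 1" "length gs = n" "h n gs \<in> L0_nbhd f U \<epsilon>"
        using step_function_in_L0_nbhd[OF \<open>strongly_measurable f\<close> U \<open>\<epsilon> > 0\<close>] by blast
      then show ?thesis by blast
    qed
    with \<open>f \<in> L0\<close> show "f \<in> L0_closure (\<Union>n\<in>{1..}. {h n gs | gs. length gs = n})"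
      by (simp add: L0_closure_def)
  qed
qed

end
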